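(* Let $F=(f_1,\dots,f_q)^\top:\mathbb{R}^n\to\mathbb{R}^q$, let $Y\subseteq\mathbb{R}^n$ be a finite nonempty set, let $y\in\mathbb{R}^n$ and $\nu>0$. Let $f_{\min},f_{\max}\in\mathbb{R}^q$ satisfy $f_{\min}\le F(x)\le f_{\max}$ componentwise for all $x\in Y\cup\{y\}$, and let the reference point be $\rho=f_{\max}+s\mathbf{1}$ with $s\ge\max_{i=1,\dots,q}\big((f_{\max})_i-(f_{\min})_i\big)$ and $s>0$. If \[ F(y)\not> F(x)-\nu\mathbf{1}\qquad\text{for all } x\in Y, \] i.e. for every $x\in Y$ there is an index $\ell$ with $f_\ell(y)\le f_\ell(x)-\nu$, then \[ HI(F(Y\cup\{y\}))-HI(F(Y))\ge\nu^q . \]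
   Context: Vector order conventions for $u,v\in\mathbb{R}^q$: $u>v$ means $u_i>v_i$ for all $i$, and $u\not>v$ is its negation; $\le$ between vectors in the hypotheses means componentwise inequality. $\mathbf{1}$ denotes the all-ones vector in $\mathbb{R}^q$. For a set $Y\subseteq\mathbb{R}^n$, $F(Y)=\{F(x):x\in Y\}$. For a finite set $A\subset\mathbb{R}^q$ and a reference point $\rho\in\mathbb{R}^q$ with $a_i\le\rho_i$ for all $a\in A$ and all $i$, the hypervolume indicator is $HI(A)=\mathrm{vol}\big(\bigcup_{a\in A}[a,\rho]\big)$, where $[a,\rho]=\{w\in\mathbb{R}^q: a_i\le w_i\le\rho_i,\ i=1,\dots,q\}$ and $\mathrm{vol}$ is Lebesgue measure on $\mathbb{R}^q$. *)

theory Defs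
  imports "HOL-Analysis.Analysis"
begin

definition vec_gt :: "real^'q \<Rightarrow> real^'q \<Rightarrow> bool" where
  "vec_gt u v \<longleftrightarrow> (\<forall>i. u $ i > v $ i)"

definition HI :: "real^'q \<Rightarrow> (real^'q) set \<Rightarrow> real" where
  "HI rho A = measure lebesgue (\<Union>a\<in>A. cbox a rho)"

end

theory Submission
  imports Defs
begin

text \<open>If the image \<open>F y\<close> of the new point is not \<open>\<nu>\<close>-dominated by any old image, then the open
  cube of side \<open>\<nu>\<close> with lower corner \<open>F y\<close> misses every old box \<open>[F x, \<rho>]\<close>; the choice of \<open>s\<close>
  keeps this cube inside \<open>[F y, \<rho>]\<close>. Hence the new point adds at least the volume \<open>\<nu>^q\<close> of the
  cube to the hypervolume.\<close>

lemma measure_box_cube_cart: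
  fixes a :: "real^'q"
  assumes "v \<ge> 0"
  shows "measure lebesgue (box a (a + v *\<^sub>R 1)) = v ^ CARD('q)"
proof -
  have "measure lebesgue (box a (a + v *\<^sub>R 1)) = measure lborel (cbox a (a + v *\<^sub>R 1))"
    by (simp add: measure_completion measure_def emeasure_lborel_box_eq emeasure_lborel_cbox_eq)
  also have "\<dots> = (\<Prod>i\<in>UNIV. (a + v *\<^sub>R 1) $ i - a $ i)"
    using assms by (intro content_cbox_cart) (auto simp: interval_ne_empty_cart)
  finally show ?thesis by simp
qed

lemma HI_insert:
  assumes "finite A"
  shows "HI \<rho> (insert a A) = HI \<rho> A + measure lebesgue (cbox a \<rho> - (\<Union>b\<in>A. cbox b \<rho>))"
proof -
  let ?U = "\<Union>b\<in>A. cbox b \<rho>"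
  have "?U \<in> lmeasurable"
    using assms by (intro fmeasurable.finite_UN) auto
  then have "measure lebesgue (?U \<union> cbox a \<rho>) = measure lebesgue ?U + measure lebesgue (cbox a \<rho> - ?U)"
    by (intro measure_Un2) auto
  then show ?thesis
    unfolding HI_def by (simp add: Un_commute)
qed

lemma box_cube_Int_cbox_eq_empty:
  assumes "\<not> vec_gt a (b - \<nu> *\<^sub>R 1)"
  shows "box a (a + \<nu> *\<^sub>R 1) \<inter> cbox b c = {}"
proof -
  obtain k where k: "a $ k \<le> b $ k - \<nu>"
    using assms by (auto simp: vec_gt_def not_less)
  have "w $ k < b $ k" if "w \<in> box a (a + \<nu> *\<^sub>R 1)" for w
  proof -
    have "w $ k < a $ k + \<nu>"
      using that by (simp add: mem_box_cart)
    then show ?thesis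
      using k by linarith
  qed
  then show ?thesis
    by (meson disjoint_iff mem_box_cart(2) not_less)
qed

lemma box_cube_subset_cbox:
  assumes "\<And>i. a $ i + \<nu> \<le> \<rho> $ i"
  shows "box a (a + \<nu> *\<^sub>R 1) \<subseteq> cbox a \<rho>"
proof
  fix w
  assume "w \<in> box a (a + \<nu> *\<^sub>R 1)"
  then have "a $ i < w $ i \<and> w $ i < a $ i + \<nu>" for i
    by (simp add: mem_box_cart)
  then have "a $ i \<le> w $ i \<and> w $ i \<le> \<rho> $ i" for i
    using assms[of i] by (meson less_imp_le order.strict_trans2)
  then show "w \<in> cbox a \<rho>"
    by (simp add: mem_box_cart)
qed

lemma HI_insert_nondominated_ge:
  fixes a :: "real^'q"
  assumes "finite A" and "\<nu> \<ge> 0"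
    and "\<And>b. b \<in> A \<Longrightarrow> \<not> vec_gt a (b - \<nu> *\<^sub>R 1)"
    and "\<And>i. a $ i + \<nu> \<le> \<rho> $ i"
  shows "HI \<rho> (insert a A) - HI \<rho> A \<ge> \<nu> ^ CARD('q)"
proof -
  let ?U = "\<Union>b\<in>A. cbox b \<rho>"
  have U: "?U \<in> lmeasurable"
    using assms(1) by (intro fmeasurable.finite_UN) auto
  have "box a (a + \<nu> *\<^sub>R 1) \<subseteq> cbox a \<rho> - ?U"
    using box_cube_subset_cbox[OF assms(4)] box_cube_Int_cbox_eq_empty[OF assms(3)] by blast
  then have "measure lebesgue (box a (a + \<nu> *\<^sub>R 1)) \<le> measure lebesgue (cbox a \<rho> - ?U)"
    using U by (intro measure_mono_fmeasurable) auto
  then show ?thesis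
    using HI_insert[OF assms(1)] measure_box_cube_cart[of \<nu> a] assms(2) by simp
qed

theorem proposition1:
  fixes F :: "real^'n \<Rightarrow> real^'q"
    and Y :: "(real^'n) set"
    and y :: "real^'n"
    and \<nu> s :: real
    and fmin fmax :: "real^'q"
  assumes "finite Y" and "Y \<noteq> {}"
    and "\<nu> > 0"
    and "\<And>x i. x \<in> Y \<union> {y} \<Longrightarrow> fmin $ i \<le> F x $ i \<and> F x $ i \<le> fmax $ i"
    and "\<And>i. s \<ge> fmax $ i - fmin $ i"
    and "s > 0"
    and "\<And>x. x \<in> Y \<Longrightarrow> \<not> vec_gt (F y) (F x - \<nu> *\<^sub>R (1::real^'q))"
  shows "HI (fmax + s *\<^sub>R (1::real^'q)) (F ` (Y \<union> {y}))
           - HI (fmax + s *\<^sub>R (1::real^'q)) (F ` Y) \<ge> \<nu> ^ CARD('q)"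
proof -
  obtain x0 where x0: "x0 \<in> Y"
    using assms(2) by blast
  then obtain l where "F y $ l \<le> F x0 $ l - \<nu>"
    using assms(7) by (auto simp: vec_gt_def not_less)
  then have "\<nu> \<le> s"
    using assms(4)[of x0 l] assms(4)[of y l] assms(5)[of l] x0 by auto
  then have "F y $ i + \<nu> \<le> (fmax + s *\<^sub>R 1) $ i" for i
    using assms(4)[of y i] by simp
  moreover have "\<not> vec_gt (F y) (b - \<nu> *\<^sub>R 1)" if "b \<in> F ` Y" for b
    using that assms(7) by blast
  moreover have "F ` (Y \<union> {y}) = insert (F y) (F ` Y)"
    by auto
  ultimately show ?thesis
    using HI_insert_nondominated_ge[of "F ` Y" \<nu> "F y"] assms(1,3) by (simp add: less_imp_le)
qed

end
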